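(* Let $e,m_+,T_+,T_->0$. There exist constants $0<C_1\le C_1'$ and $0<C_2\le C_2'$, depending only on $e,m_+,T_+,T_-$ (in particular independent of $k,\xi$), such that for every $k\in\mathbb{Z}\setminus\{0\}$, $\xi\in\mathbb{R}$ and every solution $A(t)=(A_1(t),A_2(t))^\top\in\mathbb{C}^2$ of $\frac{d}{dt}A=L_+(t)A$ on $[0,\infty)$, the functional $$\mathcal{E}_+(t)=\sqrt{\tfrac{p_1}{m_1}}|A_1|^2+2\frac{h_1}{\sqrt{m_1p_1}}\Re(A_1\bar A_2)+\sqrt{\tfrac{m_1}{p_1}}|A_2|^2$$ satisfies, for all $t\ge0$, $$C_1\mathcal{E}_+(0)\le\mathcal{E}_+(t)\le C_1'\mathcal{E}_+(0),\qquad C_2|A(0)|\le|A(t)|\le C_2'|A(0)|.$$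
   Context: For fixed $k\in\mathbb{Z}\setminus\{0\}$, $\xi\in\mathbb{R}$ let $\alpha(t)=k^2+(\xi-kt)^2$, so $\partial_t\alpha=-2k(\xi-kt)$. Define $h_1(t)=\frac14\alpha^{-1}\partial_t\alpha$, $m_1(t)=\sqrt{\frac{T_+}{m_+}}\alpha^{1/2}$, $p_1(t)=\frac{4\pi e^2}{\sqrt{m_+T_+}}\frac{\alpha^{1/2}}{\alpha+4\pi e^2/T_-}+\sqrt{\frac{m_+}{T_+}}\frac{2k^2}{\alpha^{3/2}}+\sqrt{\frac{T_+}{m_+}}\alpha^{1/2}$, and $$L_+(t)=\begin{pmatrix}-h_1(t) & -m_1(t)\\ p_1(t) & h_1(t)\end{pmatrix}.$$ (This is the Fourier-side symmetrized form, in the sheared coordinates $X=x-yt$, $Y=y$, of the linearized ion Euler–Poisson system around the Couette flow.) *)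

theory Defs
  imports "HOL-Analysis.Analysis"
begin

definition alpha :: "int \<Rightarrow> real \<Rightarrow> real \<Rightarrow> real" where
  "alpha k \<xi> t = (real_of_int k)\<^sup>2 + (\<xi> - real_of_int k * t)\<^sup>2"

definition dalpha :: "int \<Rightarrow> real \<Rightarrow> real \<Rightarrow> real" where
  "dalpha k \<xi> t = - 2 * real_of_int k * (\<xi> - real_of_int k * t)"

definition h1 :: "int \<Rightarrow> real \<Rightarrow> real \<Rightarrow> real" where
  "h1 k \<xi> t = (1/4) * dalpha k \<xi> t / alpha k \<xi> t"

definition m1 :: "real \<Rightarrow> real \<Rightarrow> int \<Rightarrow> real \<Rightarrow> real \<Rightarrow> real" where
  "m1 mp Tp k \<xi> t = sqrt (Tp / mp) * sqrt (alpha k \<xi> t)"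

definition p1 :: "real \<Rightarrow> real \<Rightarrow> real \<Rightarrow> real \<Rightarrow> int \<Rightarrow> real \<Rightarrow> real \<Rightarrow> real" where
  "p1 e mp Tp Tm k \<xi> t =
     4 * pi * e\<^sup>2 / sqrt (mp * Tp) * sqrt (alpha k \<xi> t) / (alpha k \<xi> t + 4 * pi * e\<^sup>2 / Tm)
     + sqrt (mp / Tp) * (2 * (real_of_int k)\<^sup>2) / (alpha k \<xi> t) powr (3/2)
     + sqrt (Tp / mp) * sqrt (alpha k \<xi> t)"

text \<open>A = (A1, A2) solves dA/dt = L_+(t) A on [0,\<infinity>), where
  L_+ = [[-h1, -m1],[p1, h1]].\<close>
definition is_solution ::
  "real \<Rightarrow> real \<Rightarrow> real \<Rightarrow> real \<Rightarrow> int \<Rightarrow> real \<Rightarrow> (real \<Rightarrow> complex) \<Rightarrow> (real \<Rightarrow> complex) \<Rightarrow> bool" where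
  "is_solution e mp Tp Tm k \<xi> A1 A2 \<longleftrightarrow>
     (\<forall>t\<ge>0.
        (A1 has_vector_derivative
           (complex_of_real (- h1 k \<xi> t) * A1 t - complex_of_real (m1 mp Tp k \<xi> t) * A2 t))
           (at t within {0..}) \<and>
        (A2 has_vector_derivative
           (complex_of_real (p1 e mp Tp Tm k \<xi> t) * A1 t + complex_of_real (h1 k \<xi> t) * A2 t))
           (at t within {0..}))"

definition energy ::
  "real \<Rightarrow> real \<Rightarrow> real \<Rightarrow> real \<Rightarrow> int \<Rightarrow> real \<Rightarrow> (real \<Rightarrow> complex) \<Rightarrow> (real \<Rightarrow> complex) \<Rightarrow> real \<Rightarrow> real" where
  "energy e mp Tp Tm k \<xi> A1 A2 t =
     (let m = m1 mp Tp k \<xi> t; p = p1 e mp Tp Tm k \<xi> t; h = h1 k \<xi> t in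
      sqrt (p / m) * (cmod (A1 t))\<^sup>2
      + 2 * h / sqrt (m * p) * Re (A1 t * cnj (A2 t))
      + sqrt (m / p) * (cmod (A2 t))\<^sup>2)"

definition vnorm :: "complex \<Rightarrow> complex \<Rightarrow> real" where
  "vnorm a b = sqrt ((cmod a)\<^sup>2 + (cmod b)\<^sup>2)"

end

theory Submission
  imports Defs
begin

text \<open>
  Put \<open>a = sqrt (p1/m1)\<close> and \<open>b = h1 / sqrt (m1 p1)\<close>. Then the energy is the quadratic form
  \<open>a |A1|\<^sup>2 + 2 b Re (A1 cnj A2) + |A2|\<^sup>2 / a\<close>, and because \<open>p1 = a\<^sup>2 m1\<close> and \<open>h1 = a b m1\<close>,
  along a solution every term of its derivative cancels except those containing \<open>a'\<close> or \<open>b'\<close>.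
  Uniformly in \<open>k\<close> and \<open>\<xi>\<close> one has \<open>1 \<le> a \<le> amax\<close>, \<open>|b| \<le> 1/2\<close> and \<open>|a'|, |b'| \<le> C k\<^sup>2/\<alpha>\<close>,
  so the energy is comparable to \<open>|A|\<^sup>2\<close> and its logarithmic derivative is bounded by
  \<open>K k\<^sup>2/\<alpha>\<close>. This rate is the derivative of \<open>arctan ((k t - \<xi>)/k)\<close>, whose total variation
  is at most \<open>pi\<close>; Gronwall's inequality then bounds the energy, and with it \<open>|A|\<close>, by
  \<open>exp (\<plusminus> K pi)\<close> times its initial value.
\<close>

section \<open>Gronwall's inequality with an integrable rate\<close>

lemma nonincreasing_of_deriv_nonpos:
  fixes f f' :: "real \<Rightarrow> real"
  assumes deriv: "\<And>t. a \<le> t \<Longrightarrow> (f has_real_derivative f' t) (at t within {a..})"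
    and nonpos: "\<And>t. a \<le> t \<Longrightarrow> f' t \<le> 0"
    and xy: "a \<le> x" "x \<le> y"
  shows "f y \<le> f x"
proof -
  have "\<And>z. x \<le> z \<Longrightarrow> z \<le> y \<Longrightarrow> (f has_derivative (*) (f' z)) (at z within {x..y})"
    using xy by (auto intro!: has_derivative_subset[OF deriv[unfolded has_field_derivative_def]])
  then obtain z where "z \<in> {x..y}" "f y - f x = f' z * (y - x)"
    using mvt_very_simple[OF xy(2), of f "\<lambda>z. (*) (f' z)"] by auto
  moreover have "f' z * (y - x) \<le> 0"
    using nonpos[of z] xy \<open>z \<in> {x..y}\<close> by (auto intro: mult_nonpos_nonneg)
  ultimately show ?thesis by simp
qed

lemma gronwall_two_sided:
  fixes E E' \<Phi> g :: "real \<Rightarrow> real"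
  assumes dE: "\<And>t. 0 \<le> t \<Longrightarrow> (E has_real_derivative E' t) (at t within {0..})"
    and d\<Phi>: "\<And>t. 0 \<le> t \<Longrightarrow> (\<Phi> has_real_derivative g t) (at t within {0..})"
    and rate: "\<And>t. 0 \<le> t \<Longrightarrow> \<bar>E' t\<bar> \<le> K * g t * E t"
    and "0 \<le> t"
  shows "E 0 * exp (- (K * (\<Phi> t - \<Phi> 0))) \<le> E t" "E t \<le> E 0 * exp (K * (\<Phi> t - \<Phi> 0))"
proof -
  have "E t * exp (- (K * \<Phi> t)) \<le> E 0 * exp (- (K * \<Phi> 0))"
  proof (rule nonincreasing_of_deriv_nonpos[where f = "\<lambda>t. E t * exp (- (K * \<Phi> t))"
        and f' = "\<lambda>t. (E' t - K * g t * E t) * exp (- (K * \<Phi> t))"])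
    show "((\<lambda>t. E t * exp (- (K * \<Phi> t))) has_real_derivative
            (E' s - K * g s * E s) * exp (- (K * \<Phi> s))) (at s within {0..})" if "0 \<le> s" for s
      using dE[OF that] d\<Phi>[OF that] by (auto intro!: derivative_eq_intros simp: algebra_simps)
    show "(E' s - K * g s * E s) * exp (- (K * \<Phi> s)) \<le> 0" if "0 \<le> s" for s
      using rate[OF that] by (intro mult_nonpos_nonneg) auto
  qed (use \<open>0 \<le> t\<close> in auto)
  then show "E t \<le> E 0 * exp (K * (\<Phi> t - \<Phi> 0))"
    by (simp add: exp_minus field_simps exp_diff)
  have "- (E t * exp (K * \<Phi> t)) \<le> - (E 0 * exp (K * \<Phi> 0))"
  proof (rule nonincreasing_of_deriv_nonpos[where f = "\<lambda>t. - (E t * exp (K * \<Phi> t))"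
        and f' = "\<lambda>t. - ((E' t + K * g t * E t) * exp (K * \<Phi> t))"])
    show "((\<lambda>t. - (E t * exp (K * \<Phi> t))) has_real_derivative
            - ((E' s + K * g s * E s) * exp (K * \<Phi> s))) (at s within {0..})" if "0 \<le> s" for s
      using dE[OF that] d\<Phi>[OF that] by (auto intro!: derivative_eq_intros simp: algebra_simps)
    show "- ((E' s + K * g s * E s) * exp (K * \<Phi> s)) \<le> 0" if "0 \<le> s" for s
      using rate[OF that] by (simp add: abs_le_iff)
  qed (use \<open>0 \<le> t\<close> in auto)
  then show "E 0 * exp (- (K * (\<Phi> t - \<Phi> 0))) \<le> E t"
    by (simp add: exp_minus field_simps exp_diff)
qed

corollary gronwall_bounded_phase:
  fixes E E' \<Phi> g :: "real \<Rightarrow> real"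
  assumes "\<And>t. 0 \<le> t \<Longrightarrow> (E has_real_derivative E' t) (at t within {0..})"
    and "\<And>t. 0 \<le> t \<Longrightarrow> (\<Phi> has_real_derivative g t) (at t within {0..})"
    and "\<And>t. 0 \<le> t \<Longrightarrow> \<bar>E' t\<bar> \<le> K * g t * E t"
    and "0 \<le> t" "0 \<le> K" "0 \<le> E 0" "\<bar>\<Phi> t - \<Phi> 0\<bar> \<le> M"
  shows "exp (- (K * M)) * E 0 \<le> E t" "E t \<le> exp (K * M) * E 0"
proof -
  have "\<bar>K * (\<Phi> t - \<Phi> 0)\<bar> \<le> K * M"
    using assms(5,7) by (simp add: abs_mult mult_left_mono)
  then have "exp (- (K * M)) \<le> exp (- (K * (\<Phi> t - \<Phi> 0)))" "exp (K * (\<Phi> t - \<Phi> 0)) \<le> exp (K * M)"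
    by (auto simp: abs_le_iff)
  then show "exp (- (K * M)) * E 0 \<le> E t" "E t \<le> exp (K * M) * E 0"
    using gronwall_two_sided[OF assms(1-4)] mult_right_mono[OF _ assms(6)] by (metis order_trans mult.commute)+
qed

section \<open>The energy as a quadratic form\<close>

definition qform :: "real \<Rightarrow> real \<Rightarrow> complex \<Rightarrow> complex \<Rightarrow> real" where
  "qform a b z w = a * (cmod z)\<^sup>2 + 2 * b * Re (z * cnj w) + (cmod w)\<^sup>2 / a"

lemma two_abs_Re_mult_cnj_le:
  assumes "0 < a"
  shows "2 * \<bar>Re (z * cnj w)\<bar> \<le> a * (cmod z)\<^sup>2 + (cmod w)\<^sup>2 / a"
proof -
  have "2 * \<bar>Re (z * cnj w)\<bar> \<le> 2 * (cmod z * cmod w)"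
    using abs_Re_le_cmod[of "z * cnj w"] by (simp add: norm_mult)
  also have "\<dots> \<le> a * (cmod z)\<^sup>2 + (cmod w)\<^sup>2 / a"
  proof -
    have "0 \<le> (a * cmod z - cmod w)\<^sup>2 / a" using assms by simp
    also have "\<dots> = a * (cmod z)\<^sup>2 + (cmod w)\<^sup>2 / a - 2 * (cmod z * cmod w)"
      using assms by (simp add: power2_eq_square field_simps)
    finally show ?thesis by simp
  qed
  finally show ?thesis .
qed

lemma qform_bounds:
  assumes "0 < a" "\<bar>b\<bar> \<le> 1/2"
  shows "(a * (cmod z)\<^sup>2 + (cmod w)\<^sup>2 / a) / 2 \<le> qform a b z w"
    and "qform a b z w \<le> 3/2 * (a * (cmod z)\<^sup>2 + (cmod w)\<^sup>2 / a)"
proof -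
  define N where "N = a * (cmod z)\<^sup>2 + (cmod w)\<^sup>2 / a"
  define R where "R = Re (z * cnj w)"
  have "\<bar>2 * b * R\<bar> = \<bar>b\<bar> * (2 * \<bar>R\<bar>)"
    by (simp add: abs_mult)
  also have "\<dots> \<le> 1/2 * N"
    using assms two_abs_Re_mult_cnj_le[OF assms(1), of z w] unfolding N_def R_def
    by (intro mult_mono) auto
  finally have "\<bar>2 * b * R\<bar> \<le> N / 2" by simp
  moreover have "qform a b z w = N + 2 * b * R"
    by (simp add: qform_def N_def R_def)
  ultimately show "N / 2 \<le> qform a b z w" "qform a b z w \<le> 3/2 * N"
    by (auto simp: abs_le_iff)
qed

lemma qform_nonneg:
  assumes "0 < a" "\<bar>b\<bar> \<le> 1/2"
  shows "0 \<le> qform a b z w"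
proof -
  have "0 \<le> (a * (cmod z)\<^sup>2 + (cmod w)\<^sup>2 / a) / 2"
    using assms(1) by simp
  then show ?thesis
    using qform_bounds(1)[OF assms, of z w] by linarith
qed

lemma qform_rate_bound:
  assumes "1 \<le> a" "\<bar>b\<bar> \<le> 1/2" "\<bar>a'\<bar> \<le> Ca * g" "\<bar>b'\<bar> \<le> Cb * g"
  shows "\<bar>a' * (cmod z)\<^sup>2 + 2 * b' * Re (z * cnj w) - a' / a\<^sup>2 * (cmod w)\<^sup>2\<bar>
           \<le> 2 * (Ca + Cb) * g * qform a b z w"
proof -
  define U V R where "U = (cmod z)\<^sup>2" and "V = (cmod w)\<^sup>2" and "R = Re (z * cnj w)"
  have "0 \<le> U" "0 \<le> V" "0 \<le> Ca * g" "0 \<le> Cb * g"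
    using assms(3,4) by (auto simp: U_def V_def)
  have "\<bar>a' * U\<bar> \<le> Ca * g * (a * U)"
  proof -
    have "\<bar>a' * U\<bar> \<le> Ca * g * U"
      using assms(3) \<open>0 \<le> U\<close> by (simp add: abs_mult mult_right_mono)
    also have "\<dots> \<le> Ca * g * (a * U)"
      using assms(1) \<open>0 \<le> U\<close> \<open>0 \<le> Ca * g\<close> by (intro mult_left_mono) (auto intro: mult_right_mono[of 1 a U, simplified])
    finally show ?thesis .
  qed
  moreover have "\<bar>a' / a\<^sup>2 * V\<bar> \<le> Ca * g * (V / a)"
  proof -
    have "\<bar>a' / a\<^sup>2 * V\<bar> = \<bar>a'\<bar> * (V / a) / a"
      using assms(1) \<open>0 \<le> V\<close> by (simp add: abs_mult power2_eq_square)
    also have "\<dots> \<le> \<bar>a'\<bar> * (V / a)"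
      using assms(1) \<open>0 \<le> V\<close> by (simp add: divide_le_eq) (intro mult_left_mono, auto simp: mult_le_cancel_left1)
    also have "\<dots> \<le> Ca * g * (V / a)"
      using assms(1,3) \<open>0 \<le> V\<close> by (intro mult_right_mono) auto
    finally show ?thesis .
  qed
  moreover have "\<bar>2 * b' * R\<bar> \<le> Cb * g * (a * U + V / a)"
  proof -
    have "\<bar>2 * b' * R\<bar> = \<bar>b'\<bar> * (2 * \<bar>R\<bar>)" by (simp add: abs_mult)
    also have "\<dots> \<le> Cb * g * (a * U + V / a)"
      using assms(1,4) two_abs_Re_mult_cnj_le[of a z w] unfolding U_def V_def R_def
      by (intro mult_mono) auto
    finally show ?thesis .
  qed
  ultimately have "\<bar>a' * U + 2 * b' * R - a' / a\<^sup>2 * V\<bar>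
      \<le> Ca * g * (a * U) + Ca * g * (V / a) + Cb * g * (a * U + V / a)"
    by arith
  also have "\<dots> = (Ca + Cb) * g * (a * U + V / a)"
    by (simp add: algebra_simps)
  also have "\<dots> \<le> (Ca + Cb) * g * (2 * qform a b z w)"
    using qform_bounds(1)[of a b z w] assms \<open>0 \<le> Ca * g\<close> \<open>0 \<le> Cb * g\<close> unfolding U_def V_def
    by (intro mult_left_mono) (auto simp: distrib_right)
  finally show ?thesis
    unfolding U_def V_def R_def by (simp add: algebra_simps)
qed

lemma qform_norm_bounds:
  assumes "1 \<le> a" "a \<le> S" "\<bar>b\<bar> \<le> 1/2"
  shows "((cmod z)\<^sup>2 + (cmod w)\<^sup>2) / (2 * S) \<le> qform a b z w"
    and "qform a b z w \<le> 3 * S / 2 * ((cmod z)\<^sup>2 + (cmod w)\<^sup>2)"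
proof -
  define U V where "U = (cmod z)\<^sup>2" and "V = (cmod w)\<^sup>2"
  define N where "N = a * U + V / a"
  have "0 \<le> U" "0 \<le> V" by (auto simp: U_def V_def)
  have "(U + V) / S \<le> N"
  proof -
    have "U / S \<le> U"
      using assms \<open>0 \<le> U\<close> by (simp add: divide_le_eq mult_le_cancel_left1)
    also have "U \<le> a * U"
      using assms \<open>0 \<le> U\<close> by (simp add: mult_le_cancel_right1)
    finally have "U / S \<le> a * U" .
    moreover have "V / S \<le> V / a"
      using assms \<open>0 \<le> V\<close> by (intro divide_left_mono) auto
    ultimately show ?thesis by (simp add: N_def add_divide_distrib)
  qed
  moreover have "N \<le> S * (U + V)"
  proof -
    have "a * U \<le> S * U"
      using assms \<open>0 \<le> U\<close> by (intro mult_right_mono) auto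
    moreover have "V / a \<le> V"
      using assms \<open>0 \<le> V\<close> by (simp add: divide_le_eq mult_le_cancel_left1)
    moreover have "V \<le> S * V"
      using assms \<open>0 \<le> V\<close> by (simp add: mult_le_cancel_right1)
    ultimately show ?thesis by (simp add: N_def distrib_left)
  qed
  moreover have "N / 2 \<le> qform a b z w" "qform a b z w \<le> 3/2 * N"
    using qform_bounds[of a b z w] assms unfolding N_def U_def V_def by auto
  ultimately show "(U + V) / (2 * S) \<le> qform a b z w" "qform a b z w \<le> 3 * S / 2 * (U + V)"
    by (auto simp: field_simps)
qed

lemma qform_has_real_derivative:
  fixes A1 A2 :: "real \<Rightarrow> complex" and a b :: "real \<Rightarrow> real"
  assumes A1': "(A1 has_vector_derivative
                  (complex_of_real (- h) * A1 t - complex_of_real m * A2 t)) (at t within T)"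
    and A2': "(A2 has_vector_derivative
                  (complex_of_real p * A1 t + complex_of_real h * A2 t)) (at t within T)"
    and a': "(a has_real_derivative a') (at t within T)"
    and b': "(b has_real_derivative b') (at t within T)"
    and "0 < a t" "p = (a t)\<^sup>2 * m" "h = b t * m * a t"
  shows "((\<lambda>t. qform (a t) (b t) (A1 t) (A2 t)) has_real_derivative
           a' * (cmod (A1 t))\<^sup>2 + 2 * b' * Re (A1 t * cnj (A2 t)) - a' / (a t)\<^sup>2 * (cmod (A2 t))\<^sup>2)
         (at t within T)"
proof -
  define x1 y1 x2 y2 where "x1 = (\<lambda>t. Re (A1 t))" and "y1 = (\<lambda>t. Im (A1 t))"
    and "x2 = (\<lambda>t. Re (A2 t))" and "y2 = (\<lambda>t. Im (A2 t))"
  have x1': "(x1 has_real_derivative - h * x1 t - m * x2 t) (at t within T)"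
    and y1': "(y1 has_real_derivative - h * y1 t - m * y2 t) (at t within T)"
    using A1' unfolding has_vector_derivative_complex_iff x1_def x2_def y1_def y2_def by auto
  have x2': "(x2 has_real_derivative p * x1 t + h * x2 t) (at t within T)"
    and y2': "(y2 has_real_derivative p * y1 t + h * y2 t) (at t within T)"
    using A2' unfolding has_vector_derivative_complex_iff x1_def x2_def y1_def y2_def by auto
  have qform_eq: "(\<lambda>t. qform (a t) (b t) (A1 t) (A2 t)) = (\<lambda>t. a t * ((x1 t)\<^sup>2 + (y1 t)\<^sup>2)
          + 2 * b t * (x1 t * x2 t + y1 t * y2 t) + ((x2 t)\<^sup>2 + (y2 t)\<^sup>2) / a t)"
    by (simp add: qform_def cmod_power2 x1_def x2_def y1_def y2_def)
  have rate_eq: "a' * (cmod (A1 t))\<^sup>2 + 2 * b' * Re (A1 t * cnj (A2 t)) - a' / (a t)\<^sup>2 * (cmod (A2 t))\<^sup>2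
      = a' * ((x1 t)\<^sup>2 + (y1 t)\<^sup>2) + 2 * b' * (x1 t * x2 t + y1 t * y2 t)
        - a' / (a t)\<^sup>2 * ((x2 t)\<^sup>2 + (y2 t)\<^sup>2)"
    by (simp add: cmod_power2 x1_def x2_def y1_def y2_def)
  show ?thesis
    unfolding qform_eq rate_eq using \<open>0 < a t\<close> \<open>p = _\<close> \<open>h = _\<close>
    by (auto intro!: derivative_eq_intros x1' y1' x2' y2' a' b'
             simp: field_simps power2_eq_square)
qed

lemma comparable_quantity_bounds:
  fixes S L U W0 Wt E0 Et :: real
  assumes "0 < S" "0 \<le> L" "0 \<le> U"
    and "W0 / (2 * S) \<le> E0" "E0 \<le> 3 * S / 2 * W0"
    and "Wt / (2 * S) \<le> Et" "Et \<le> 3 * S / 2 * Wt"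
    and "L * E0 \<le> Et" "Et \<le> U * E0"
  shows "L / (3 * S\<^sup>2) * W0 \<le> Wt" "Wt \<le> 3 * S\<^sup>2 * U * W0"
proof -
  have "L / (3 * S\<^sup>2) * W0 = 2 / (3 * S) * (L * (W0 / (2 * S)))"
    using assms(1) by (simp add: power2_eq_square field_simps)
  also have "\<dots> \<le> 2 / (3 * S) * (L * E0)"
    using assms by (intro mult_left_mono) auto
  also have "\<dots> \<le> 2 / (3 * S) * Et"
    using assms by (intro mult_left_mono) auto
  also have "\<dots> \<le> Wt"
    using assms by (simp add: field_simps)
  finally show "L / (3 * S\<^sup>2) * W0 \<le> Wt" .
  have "Wt \<le> 2 * S * Et"
    using assms by (simp add: field_simps)
  also have "\<dots> \<le> 2 * S * (U * E0)"
    using assms by (intro mult_left_mono) auto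
  also have "\<dots> \<le> 2 * S * (U * (3 * S / 2 * W0))"
    using assms by (intro mult_left_mono) auto
  also have "\<dots> = 3 * S\<^sup>2 * U * W0"
    by (simp add: power2_eq_square)
  finally show "Wt \<le> 3 * S\<^sup>2 * U * W0" .
qed

section \<open>The coefficients of the sheared system\<close>

lemma k2_le_alpha: "(real_of_int k)\<^sup>2 \<le> alpha k \<xi> t"
  by (simp add: alpha_def)

lemma one_le_k2:
  assumes "k \<noteq> 0"
  shows "1 \<le> (real_of_int k)\<^sup>2"
proof -
  have "1 \<le> \<bar>real_of_int k\<bar>"
    using assms by linarith
  then show ?thesis
    by (metis one_le_power power2_abs)
qed

lemma one_le_alpha: "k \<noteq> 0 \<Longrightarrow> 1 \<le> alpha k \<xi> t"
  using one_le_k2 k2_le_alpha order_trans by blast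

lemma abs_dalpha_le_alpha: "\<bar>dalpha k \<xi> t\<bar> \<le> alpha k \<xi> t"
  using sum_squares_bound[of "\<bar>real_of_int k\<bar>" "\<bar>\<xi> - real_of_int k * t\<bar>"]
  by (simp add: alpha_def dalpha_def abs_mult)

lemma dalpha_sq_le: "(dalpha k \<xi> t)\<^sup>2 \<le> 4 * (real_of_int k)\<^sup>2 * alpha k \<xi> t"
proof -
  have "(dalpha k \<xi> t)\<^sup>2 = 4 * (real_of_int k)\<^sup>2 * (\<xi> - real_of_int k * t)\<^sup>2"
    by (simp add: dalpha_def power_mult_distrib)
  also have "\<dots> \<le> 4 * (real_of_int k)\<^sup>2 * alpha k \<xi> t"
    by (intro mult_left_mono) (auto simp: alpha_def)
  finally show ?thesis .
qed

lemma has_real_derivative_alpha: "(alpha k \<xi> has_real_derivative dalpha k \<xi> t) (at t within T)"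
  unfolding alpha_def[abs_def] dalpha_def
  by (auto intro!: derivative_eq_intros simp: algebra_simps power2_eq_square)

lemma has_real_derivative_dalpha:
  "(dalpha k \<xi> has_real_derivative 2 * (real_of_int k)\<^sup>2) (at t within T)"
  unfolding dalpha_def[abs_def]
  by (auto intro!: derivative_eq_intros simp: algebra_simps power2_eq_square)

lemma has_real_derivative_arctan_phase:
  assumes "k \<noteq> 0"
  shows "((\<lambda>t. arctan ((real_of_int k * t - \<xi>) / real_of_int k)) has_real_derivative
           (real_of_int k)\<^sup>2 / alpha k \<xi> t) (at t within T)"
proof -
  have "inverse (1 + ((real_of_int k * t - \<xi>) / real_of_int k)\<^sup>2) = (real_of_int k)\<^sup>2 / alpha k \<xi> t"
    using assms by (simp add: alpha_def field_simps power2_eq_square)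
  then show ?thesis
    using assms by (auto intro!: derivative_eq_intros)
qed

lemma abs_arctan_diff_le_pi: "\<bar>arctan x - arctan y\<bar> \<le> pi"
  using arctan_bounded[of x] arctan_bounded[of y] by (simp add: abs_le_iff)

context
  fixes e mp Tp Tm :: real
  assumes pos: "0 < e" "0 < mp" "0 < Tp" "0 < Tm"
begin

definition "cA = 4 * pi * e\<^sup>2 / Tp"
definition "cB = 4 * pi * e\<^sup>2 / Tm"
definition "cD = 2 * mp / Tp"
definition "sgm = sqrt (Tp / mp)"

definition "Ka = cA + 2 * cD"
definition "Kb = (8 + Ka) / (4 * sgm)"
definition "gronwall_const = 2 * (Ka + Kb)"
definition "amax = sqrt (1 + cA / cB + cD)"

lemma consts_pos: "0 < cA" "0 < cB" "0 < cD" "0 < sgm"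
  using pos by (auto simp: cA_def cB_def cD_def sgm_def)

lemma sgm_sq_cD: "sgm\<^sup>2 * cD = 2"
  using pos by (simp add: sgm_def cD_def)

lemma one_le_amax: "1 \<le> amax"
  using consts_pos by (simp add: amax_def)

lemma gronwall_const_nonneg: "0 \<le> gronwall_const"
  using consts_pos by (simp add: gronwall_const_def Ka_def Kb_def)

context
  fixes k :: int and \<xi> :: real
  assumes k_nz: "k \<noteq> 0"
begin

abbreviation "kr \<equiv> real_of_int k"
abbreviation "al \<equiv> alpha k \<xi>"
abbreviation "al' \<equiv> dalpha k \<xi>"

definition "ratio t = 1 + cA / (al t + cB) + cD * kr\<^sup>2 / (al t)\<^sup>2"
definition "ratio' t = - (cA / (al t + cB)\<^sup>2 + 2 * cD * kr\<^sup>2 / (al t) ^ 3) * al' t"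
definition "coef_a t = sqrt (ratio t)"
definition "coef_a' t = ratio' t / (2 * coef_a t)"
definition "coef_b t = al' t / (4 * sgm * al t * sqrt (al t) * coef_a t)"
definition "coef_b' t = (2 * kr\<^sup>2 / (al t * sqrt (al t) * coef_a t)
    - 3 * (al' t)\<^sup>2 / (2 * ((al t)\<^sup>2 * sqrt (al t) * coef_a t))
    - al' t * coef_a' t / (al t * sqrt (al t) * (coef_a t)\<^sup>2)) / (4 * sgm)"
definition "rate t = kr\<^sup>2 / al t"

lemma al_ge: "1 \<le> al t" "kr\<^sup>2 \<le> al t"
  using one_le_alpha[OF k_nz] k2_le_alpha by auto

lemma ratio_ge: "1 \<le> ratio t" "cD * kr\<^sup>2 / (al t)\<^sup>2 \<le> ratio t"
  using consts_pos al_ge[of t] by (auto simp: ratio_def)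

lemma ratio_le: "ratio t \<le> 1 + cA / cB + cD"
proof -
  have "cA / (al t + cB) \<le> cA / cB"
    using consts_pos al_ge[of t] by (intro divide_left_mono) auto
  moreover have "al t \<le> (al t)\<^sup>2"
    using al_ge(1)[of t] by (simp add: power2_eq_square mult_le_cancel_left1)
  then have "kr\<^sup>2 / (al t)\<^sup>2 \<le> 1"
    using al_ge[of t] by simp
  then have "cD * kr\<^sup>2 / (al t)\<^sup>2 \<le> cD"
    using consts_pos mult_left_mono[of "kr\<^sup>2 / (al t)\<^sup>2" 1 cD] by simp
  ultimately show ?thesis
    unfolding ratio_def by linarith
qed

lemma coef_a_bounds: "1 \<le> coef_a t" "coef_a t \<le> amax"
  using ratio_ge(1)[of t] ratio_le[of t] by (auto simp: coef_a_def amax_def)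

lemma coef_a_sq: "(coef_a t)\<^sup>2 = ratio t"
  using ratio_ge(1)[of t] by (simp add: coef_a_def)

lemma has_real_derivative_ratio: "(ratio has_real_derivative ratio' t) (at t within T)"
proof -
  have "0 < al t" using al_ge[of t] by simp
  then show ?thesis
    unfolding ratio_def[abs_def] ratio'_def
    using consts_pos
    by (auto intro!: derivative_eq_intros has_real_derivative_alpha
             simp: power2_eq_square power3_eq_cube field_simps)
qed

lemma has_real_derivative_coef_a: "(coef_a has_real_derivative coef_a' t) (at t within T)"
  using ratio_ge(1)[of t] unfolding coef_a_def[abs_def] coef_a'_def
  by (auto intro!: derivative_eq_intros has_real_derivative_ratio simp: field_simps)

lemma has_real_derivative_coef_b: "(coef_b has_real_derivative coef_b' t) (at t within T)"
proof -
  have "0 < al t" "0 < coef_a t" using al_ge[of t] coef_a_bounds[of t] by auto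
  moreover have "sqrt (al t) * sqrt (al t) = al t" using \<open>0 < al t\<close> by simp
  ultimately show ?thesis
    unfolding coef_b_def[abs_def] coef_b'_def
    using consts_pos
    by (auto intro!: derivative_eq_intros has_real_derivative_alpha has_real_derivative_dalpha
             has_real_derivative_coef_a simp: power2_eq_square field_simps)
qed

lemma abs_ratio'_le: "\<bar>ratio' t\<bar> \<le> Ka * rate t"
proof -
  define a where "a = al t"
  have "1 \<le> a" "1 \<le> kr\<^sup>2" "\<bar>al' t\<bar> \<le> a"
    using al_ge[of t] one_le_k2[OF k_nz] abs_dalpha_le_alpha by (auto simp: a_def)
  define X where "X = cA / (a + cB)\<^sup>2 + 2 * cD * kr\<^sup>2 / a ^ 3"
  have "0 \<le> X" using consts_pos \<open>1 \<le> a\<close> by (simp add: X_def)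
  have "\<bar>ratio' t\<bar> = X * \<bar>al' t\<bar>"
    using \<open>0 \<le> X\<close> by (simp add: ratio'_def X_def a_def abs_mult)
  also have "\<dots> \<le> X * a"
    using \<open>\<bar>al' t\<bar> \<le> a\<close> \<open>0 \<le> X\<close> by (intro mult_left_mono)
  also have "\<dots> = cA * a / (a + cB)\<^sup>2 + 2 * cD * kr\<^sup>2 / a\<^sup>2"
    using \<open>1 \<le> a\<close> by (simp add: X_def field_simps power2_eq_square power3_eq_cube)
  also have "\<dots> \<le> cA * kr\<^sup>2 / a + 2 * cD * kr\<^sup>2 / a"
  proof (rule add_mono)
    have "cA * a / (a + cB)\<^sup>2 \<le> cA * a / a\<^sup>2"
      using consts_pos \<open>1 \<le> a\<close> by (intro divide_left_mono) (auto simp: power_mono)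
    also have "\<dots> = cA / a"
      using \<open>1 \<le> a\<close> by (simp add: power2_eq_square)
    also have "\<dots> \<le> cA * kr\<^sup>2 / a"
      using consts_pos \<open>1 \<le> a\<close> \<open>1 \<le> kr\<^sup>2\<close> by (intro divide_right_mono) auto
    finally show "cA * a / (a + cB)\<^sup>2 \<le> cA * kr\<^sup>2 / a" .
    have "a \<le> a\<^sup>2"
      using \<open>1 \<le> a\<close> by (simp add: power2_eq_square)
    then show "2 * cD * kr\<^sup>2 / a\<^sup>2 \<le> 2 * cD * kr\<^sup>2 / a"
      using consts_pos \<open>1 \<le> a\<close> by (intro divide_left_mono) auto
  qed
  also have "\<dots> = Ka * rate t"
    by (simp add: Ka_def rate_def a_def add_divide_distrib algebra_simps)
  finally show ?thesis .
qed

lemma abs_coef_a'_le: "\<bar>coef_a' t\<bar> \<le> Ka * rate t"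
proof -
  have "\<bar>coef_a' t\<bar> = \<bar>ratio' t\<bar> / (2 * coef_a t)"
    using coef_a_bounds[of t] by (simp add: coef_a'_def abs_mult)
  also have "\<dots> \<le> \<bar>ratio' t\<bar>"
    using coef_a_bounds[of t] by (simp add: divide_le_eq mult_le_cancel_left1)
  finally show ?thesis
    using abs_ratio'_le[of t] by linarith
qed

lemma abs_coef_b_le: "\<bar>coef_b t\<bar> \<le> 1/2"
proof -
  \<comment> \<open>the term \<open>cD k\<^sup>2/\<alpha>\<^sup>2\<close> of \<open>ratio\<close> alone already makes the denominator large enough\<close>
  define a where "a = al t"
  define den where "den = 4 * sgm * a * sqrt a * coef_a t"
  have "1 \<le> a" using al_ge[of t] by (simp add: a_def)
  have "0 < den"
    using consts_pos coef_a_bounds[of t] \<open>1 \<le> a\<close> by (simp add: den_def)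
  have "den\<^sup>2 = 16 * sgm\<^sup>2 * a\<^sup>2 * a * ratio t"
    using \<open>1 \<le> a\<close> by (simp add: den_def power_mult_distrib coef_a_sq)
  also have "\<dots> \<ge> 16 * sgm\<^sup>2 * a\<^sup>2 * a * (cD * kr\<^sup>2 / a\<^sup>2)"
    using ratio_ge(2)[of t] \<open>1 \<le> a\<close> by (intro mult_left_mono) (auto simp: a_def)
  also have "16 * sgm\<^sup>2 * a\<^sup>2 * a * (cD * kr\<^sup>2 / a\<^sup>2) = 32 * kr\<^sup>2 * a"
    using \<open>1 \<le> a\<close> sgm_sq_cD by (simp add: field_simps power2_eq_square)
  finally have "32 * kr\<^sup>2 * a \<le> den\<^sup>2" .
  moreover have "(al' t)\<^sup>2 \<le> 4 * kr\<^sup>2 * a" "0 \<le> kr\<^sup>2 * a"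
    using dalpha_sq_le[of k \<xi> t] \<open>1 \<le> a\<close> by (auto simp: a_def)
  ultimately have "(2 * al' t)\<^sup>2 \<le> den\<^sup>2"
    unfolding power_mult_distrib by simp
  then have "\<bar>2 * al' t\<bar> \<le> den"
    using \<open>0 < den\<close> by (metis abs_le_square_iff abs_of_pos)
  then have "\<bar>al' t\<bar> / den \<le> 1/2"
    using \<open>0 < den\<close> by (simp add: divide_le_eq abs_mult)
  moreover have "coef_b t = al' t / den"
    by (simp add: coef_b_def den_def a_def)
  ultimately show ?thesis
    using \<open>0 < den\<close> by simp
qed

lemma abs_coef_b'_le: "\<bar>coef_b' t\<bar> \<le> Kb * rate t"
proof -
  define a w A where "a = al t" and "w = sqrt (al t)" and "A = coef_a t"
  have "1 \<le> a" "1 \<le> w" "1 \<le> A"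
    using al_ge[of t] coef_a_bounds[of t] by (auto simp: a_def w_def A_def)
  have shrink: "x / (d * c) \<le> x / d" if "0 \<le> x" "0 < d" "1 \<le> c" for x d c :: real
    using that by (intro divide_left_mono) (auto simp: mult_le_cancel_left1)
  have "1 \<le> w * A" "1 \<le> w * A\<^sup>2"
    using \<open>1 \<le> w\<close> \<open>1 \<le> A\<close> one_le_power[OF \<open>1 \<le> A\<close>, of 2]
      mult_mono[of 1 w 1 A] mult_mono[of 1 w 1 "A\<^sup>2"] by auto
  define T1 T2 T3 where "T1 = 2 * kr\<^sup>2 / (a * w * A)"
    and "T2 = 3 * (al' t)\<^sup>2 / (2 * (a\<^sup>2 * w * A))"
    and "T3 = al' t * coef_a' t / (a * w * A\<^sup>2)"
  have "\<bar>T1\<bar> \<le> 2 * rate t"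
  proof -
    have "\<bar>T1\<bar> = 2 * kr\<^sup>2 / (a * (w * A))"
      using \<open>1 \<le> a\<close> \<open>1 \<le> w\<close> \<open>1 \<le> A\<close> by (simp add: T1_def mult.assoc)
    also have "\<dots> \<le> 2 * kr\<^sup>2 / a"
      using \<open>1 \<le> a\<close> \<open>1 \<le> w * A\<close> by (intro shrink) auto
    finally show ?thesis by (simp add: rate_def a_def)
  qed
  moreover have "\<bar>T2\<bar> \<le> 6 * rate t"
  proof -
    have "\<bar>T2\<bar> = 3 * (al' t)\<^sup>2 / (2 * a\<^sup>2 * (w * A))"
      using \<open>1 \<le> a\<close> \<open>1 \<le> w\<close> \<open>1 \<le> A\<close> by (simp add: T2_def mult.assoc)
    also have "\<dots> \<le> 3 * (al' t)\<^sup>2 / (2 * a\<^sup>2)"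
      using \<open>1 \<le> a\<close> \<open>1 \<le> w * A\<close> by (intro shrink) auto
    also have "\<dots> \<le> 3 * (4 * kr\<^sup>2 * a) / (2 * a\<^sup>2)"
      using dalpha_sq_le[of k \<xi> t] \<open>1 \<le> a\<close> by (intro divide_right_mono) (auto simp: a_def mult_ac)
    also have "\<dots> = 6 * rate t"
      using \<open>1 \<le> a\<close> by (simp add: rate_def a_def power2_eq_square)
    finally show ?thesis .
  qed
  moreover have "\<bar>T3\<bar> \<le> Ka * rate t"
  proof -
    have "\<bar>T3\<bar> = \<bar>al' t\<bar> * \<bar>coef_a' t\<bar> / (a * (w * A\<^sup>2))"
      using \<open>1 \<le> a\<close> \<open>1 \<le> w\<close> \<open>1 \<le> A\<close> by (simp add: T3_def abs_mult mult.assoc)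
    also have "\<dots> \<le> \<bar>al' t\<bar> * \<bar>coef_a' t\<bar> / a"
      using \<open>1 \<le> a\<close> \<open>1 \<le> w * A\<^sup>2\<close> by (intro shrink) auto
    also have "\<dots> \<le> a * (Ka * rate t) / a"
      using abs_dalpha_le_alpha[of k \<xi> t] abs_coef_a'_le[of t] \<open>1 \<le> a\<close>
      by (intro divide_right_mono mult_mono) (auto simp: a_def)
    also have "\<dots> = Ka * rate t"
      using \<open>1 \<le> a\<close> by simp
    finally show ?thesis .
  qed
  moreover have "coef_b' t = (T1 - T2 - T3) / (4 * sgm)"
    by (simp add: coef_b'_def T1_def T2_def T3_def a_def w_def A_def)
  ultimately show ?thesis
    using consts_pos by (simp add: Kb_def field_simps)
qed

lemma m1_eq: "m1 mp Tp k \<xi> t = sgm * sqrt (al t)"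
  by (simp add: m1_def sgm_def)

lemma p1_eq: "p1 e mp Tp Tm k \<xi> t = ratio t * m1 mp Tp k \<xi> t"
proof -
  define w sm st d where "w = sqrt (al t)" and "sm = sqrt mp" and "st = sqrt Tp"
    and "d = al t + cB"
  have "0 < w" "0 < sm" "0 < st" "0 < d"
    using pos al_ge[of t] consts_pos by (auto simp: w_def sm_def st_def d_def)
  have "al t = w\<^sup>2" "mp = sm\<^sup>2" "Tp = st\<^sup>2"
    using pos al_ge[of t] by (auto simp: w_def sm_def st_def)
  have "al t powr (3/2) = w\<^sup>2 * w"
    using \<open>0 < w\<close> unfolding \<open>al t = w\<^sup>2\<close>
    by (simp add: powr_add[of _ 1 "1/2", simplified] powr_half_sqrt)
  then have "p1 e mp Tp Tm k \<xi> t
      = 4 * pi * e\<^sup>2 / (sm * st) * w / d + sm / st * (2 * kr\<^sup>2) / (w\<^sup>2 * w) + st / sm * w"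
    unfolding p1_def using pos al_ge[of t]
    by (simp add: w_def sm_def st_def d_def cB_def real_sqrt_mult real_sqrt_divide)
  also have "\<dots> = ratio t * m1 mp Tp k \<xi> t"
    using \<open>0 < w\<close> \<open>0 < sm\<close> \<open>0 < st\<close> \<open>0 < d\<close>
    unfolding ratio_def m1_eq sgm_def cA_def cD_def d_def[symmetric]
    unfolding \<open>al t = w\<^sup>2\<close> \<open>mp = sm\<^sup>2\<close> \<open>Tp = st\<^sup>2\<close>
    by (simp add: real_sqrt_divide field_simps power2_eq_square)
  finally show ?thesis .
qed

lemma h1_eq: "h1 k \<xi> t = coef_b t * m1 mp Tp k \<xi> t * coef_a t"
  using consts_pos al_ge[of t] coef_a_bounds[of t]
  by (simp add: h1_def coef_b_def m1_eq field_simps)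

lemma energy_eq_qform:
  "energy e mp Tp Tm k \<xi> A1 A2 t = qform (coef_a t) (coef_b t) (A1 t) (A2 t)"
proof -
  define m where "m = m1 mp Tp k \<xi> t"
  have "0 < m" "0 < coef_a t"
    using consts_pos al_ge[of t] coef_a_bounds[of t] by (auto simp: m_def m1_eq)
  then have "sqrt (p1 e mp Tp Tm k \<xi> t / m) = coef_a t"
    and "sqrt (m * p1 e mp Tp Tm k \<xi> t) = m * coef_a t"
    and "sqrt (m / p1 e mp Tp Tm k \<xi> t) = 1 / coef_a t"
    and "2 * h1 k \<xi> t / (m * coef_a t) = 2 * coef_b t"
    by (simp_all add: p1_eq h1_eq m_def coef_a_sq[symmetric] real_sqrt_mult real_sqrt_divide
        power2_eq_square)
  then show ?thesis
    unfolding energy_def qform_def Let_def m_def[symmetric] by simp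
qed

lemma energy_has_real_derivative:
  assumes "is_solution e mp Tp Tm k \<xi> A1 A2" "0 \<le> t"
  shows "((\<lambda>t. energy e mp Tp Tm k \<xi> A1 A2 t) has_real_derivative
           coef_a' t * (cmod (A1 t))\<^sup>2 + 2 * coef_b' t * Re (A1 t * cnj (A2 t))
           - coef_a' t / (coef_a t)\<^sup>2 * (cmod (A2 t))\<^sup>2) (at t within {0..})"
  unfolding energy_eq_qform
proof (rule qform_has_real_derivative)
  show "(A1 has_vector_derivative complex_of_real (- h1 k \<xi> t) * A1 t
          - complex_of_real (m1 mp Tp k \<xi> t) * A2 t) (at t within {0..})"
    and "(A2 has_vector_derivative complex_of_real (p1 e mp Tp Tm k \<xi> t) * A1 t
          + complex_of_real (h1 k \<xi> t) * A2 t) (at t within {0..})"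
    using assms unfolding is_solution_def by auto
qed (use coef_a_bounds[of t] in \<open>auto simp: has_real_derivative_coef_a has_real_derivative_coef_b
      p1_eq h1_eq coef_a_sq\<close>)

lemma energy_bounds:
  assumes "is_solution e mp Tp Tm k \<xi> A1 A2" "0 \<le> t"
  shows "exp (- (gronwall_const * pi)) * energy e mp Tp Tm k \<xi> A1 A2 0 \<le> energy e mp Tp Tm k \<xi> A1 A2 t"
    and "energy e mp Tp Tm k \<xi> A1 A2 t \<le> exp (gronwall_const * pi) * energy e mp Tp Tm k \<xi> A1 A2 0"
proof -
  define E where "E = energy e mp Tp Tm k \<xi> A1 A2"
  define E' where "E' s = coef_a' s * (cmod (A1 s))\<^sup>2 + 2 * coef_b' s * Re (A1 s * cnj (A2 s))
      - coef_a' s / (coef_a s)\<^sup>2 * (cmod (A2 s))\<^sup>2" for s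
  define \<Phi> where "\<Phi> s = arctan ((kr * s - \<xi>) / kr)" for s
  have dE: "(E has_real_derivative E' s) (at s within {0..})" if "0 \<le> s" for s
    unfolding E_def E'_def using energy_has_real_derivative[OF assms(1) that] .
  have d\<Phi>: "(\<Phi> has_real_derivative rate s) (at s within {0..})" for s
    unfolding \<Phi>_def[abs_def] rate_def using has_real_derivative_arctan_phase[OF k_nz] .
  have rate: "\<bar>E' s\<bar> \<le> gronwall_const * rate s * E s" for s
    unfolding E_def E'_def energy_eq_qform gronwall_const_def
    using qform_rate_bound[OF coef_a_bounds(1) abs_coef_b_le abs_coef_a'_le abs_coef_b'_le] .
  have "0 \<le> E 0"
    using qform_nonneg coef_a_bounds[of 0] abs_coef_b_le[of 0] by (simp add: E_def energy_eq_qform)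
  from gronwall_bounded_phase[OF dE d\<Phi> rate assms(2) gronwall_const_nonneg this]
  show "exp (- (gronwall_const * pi)) * E 0 \<le> E t" "E t \<le> exp (gronwall_const * pi) * E 0"
    unfolding \<Phi>_def using abs_arctan_diff_le_pi by auto
qed

lemma vnorm_bounds:
  assumes "is_solution e mp Tp Tm k \<xi> A1 A2" "0 \<le> t"
  shows "sqrt (exp (- (gronwall_const * pi)) / (3 * amax\<^sup>2)) * vnorm (A1 0) (A2 0) \<le> vnorm (A1 t) (A2 t)"
    and "vnorm (A1 t) (A2 t) \<le> sqrt (3 * amax\<^sup>2 * exp (gronwall_const * pi)) * vnorm (A1 0) (A2 0)"
proof -
  define W where "W s = (cmod (A1 s))\<^sup>2 + (cmod (A2 s))\<^sup>2" for s
  have "\<And>s. W s / (2 * amax) \<le> energy e mp Tp Tm k \<xi> A1 A2 s"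
    and "\<And>s. energy e mp Tp Tm k \<xi> A1 A2 s \<le> 3 * amax / 2 * W s"
    using qform_norm_bounds[OF coef_a_bounds abs_coef_b_le] by (auto simp: W_def energy_eq_qform)
  then have "exp (- (gronwall_const * pi)) / (3 * amax\<^sup>2) * W 0 \<le> W t"
    and "W t \<le> 3 * amax\<^sup>2 * exp (gronwall_const * pi) * W 0"
    using comparable_quantity_bounds[OF _ _ _ _ _ _ _ energy_bounds[OF assms]] one_le_amax by auto
  then show "sqrt (exp (- (gronwall_const * pi)) / (3 * amax\<^sup>2)) * vnorm (A1 0) (A2 0) \<le> vnorm (A1 t) (A2 t)"
    and "vnorm (A1 t) (A2 t) \<le> sqrt (3 * amax\<^sup>2 * exp (gronwall_const * pi)) * vnorm (A1 0) (A2 0)"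
    by (auto simp: vnorm_def W_def simp flip: real_sqrt_mult intro: real_sqrt_le_mono)
qed

end

end

theorem lemma3p1:
  fixes e mp Tp Tm :: real
  assumes "e > 0" "mp > 0" "Tp > 0" "Tm > 0"
  shows "\<exists>C1 C1' C2 C2' :: real. 0 < C1 \<and> C1 \<le> C1' \<and> 0 < C2 \<and> C2 \<le> C2' \<and>
    (\<forall>(k::int) (\<xi>::real) (A1::real \<Rightarrow> complex) (A2::real \<Rightarrow> complex).
       k \<noteq> 0 \<longrightarrow> is_solution e mp Tp Tm k \<xi> A1 A2 \<longrightarrow>
       (\<forall>t\<ge>0.
          C1 * energy e mp Tp Tm k \<xi> A1 A2 0 \<le> energy e mp Tp Tm k \<xi> A1 A2 t \<and>
          energy e mp Tp Tm k \<xi> A1 A2 t \<le> C1' * energy e mp Tp Tm k \<xi> A1 A2 0 \<and>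
          C2 * vnorm (A1 0) (A2 0) \<le> vnorm (A1 t) (A2 t) \<and>
          vnorm (A1 t) (A2 t) \<le> C2' * vnorm (A1 0) (A2 0)))"
proof -
  define K S where "K = gronwall_const e mp Tp" and "S = amax e mp Tp Tm"
  define c c' where "c = exp (- (K * pi)) / (3 * S\<^sup>2)" and "c' = 3 * S\<^sup>2 * exp (K * pi)"
  have "0 \<le> K" "1 \<le> 3 * S\<^sup>2"
    using gronwall_const_nonneg[OF assms] one_le_power[OF one_le_amax[OF assms], of 2]
    by (simp_all add: K_def S_def)
  have "c \<le> exp (- (K * pi)) / 1"
    unfolding c_def using \<open>1 \<le> 3 * S\<^sup>2\<close> by (intro divide_left_mono) auto
  also have "\<dots> \<le> 1"
    using \<open>0 \<le> K\<close> by simp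
  also have "1 \<le> c'"
    unfolding c'_def using \<open>0 \<le> K\<close> \<open>1 \<le> 3 * S\<^sup>2\<close> mult_mono[of 1 "3 * S\<^sup>2" 1 "exp (K * pi)"] by simp
  finally have "c \<le> c'" .
  have "0 < c"
    unfolding c_def using \<open>1 \<le> 3 * S\<^sup>2\<close> by (intro divide_pos_pos) auto
  show ?thesis
  proof (rule exI[of _ "exp (- (K * pi))"], rule exI[of _ "exp (K * pi)"],
      rule exI[of _ "sqrt c"], rule exI[of _ "sqrt c'"], intro conjI allI impI)
    fix k :: int and \<xi> t :: real and A1 A2 :: "real \<Rightarrow> complex"
    assume "k \<noteq> 0" "is_solution e mp Tp Tm k \<xi> A1 A2" "0 \<le> t"
    with assms show "exp (- (K * pi)) * energy e mp Tp Tm k \<xi> A1 A2 0 \<le> energy e mp Tp Tm k \<xi> A1 A2 t"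
      and "energy e mp Tp Tm k \<xi> A1 A2 t \<le> exp (K * pi) * energy e mp Tp Tm k \<xi> A1 A2 0"
      and "sqrt c * vnorm (A1 0) (A2 0) \<le> vnorm (A1 t) (A2 t)"
      and "vnorm (A1 t) (A2 t) \<le> sqrt c' * vnorm (A1 0) (A2 0)"
      unfolding K_def S_def c_def c'_def by (simp_all add: energy_bounds vnorm_bounds)
  qed (use \<open>0 \<le> K\<close> \<open>0 < c\<close> \<open>c \<le> c'\<close> in auto)
qed

end
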